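(* If $x_i$ is an optimal mechanism for agent $i$ (maximizing $\mathbb E[x_i(s)]$ subject to (P) and (IC)) with indirect utility $U_i(s_i)=\mathbb E[\omega x_i(s_i,s_{-i})\mid s_i]$, then $U_i(s_i)\ge 2s_i-1$ for every type $s_i$.
   Context: Setup. A state $\omega\in\{-1,+1\}$ is drawn with probability $1/2$ each. There are $n\ge2$ agents. Conditional on $\omega$, signals are i.i.d. with distribution $\mathbb F_\omega$ on $[0,1]$, normalized so that $s_i=\mathbb P[\omega=+1\mid s_i]$; $\mathbb F_{-1},\mathbb F_{+1}$ mutually absolutely continuous with densities; $\mathbb F=(\mathbb F_{-1}+\mathbb F_{+1})/2$ has density supported on a non-singleton interval with endpoints $\underline s<\overline s$ in $[0,1]$, differentiable with continuous derivative and $|f'/f|$ bounded. A mechanism for agent $i$ is measurable $x_i:[\underline s,\overline s]^n\to[0,1]$ (probability of receiving a good worth $\omega$, else $0$). (P): $\mathbb E[\omega x_i(s_i,s_{-i})\mid s_i]\ge0$; (IC): $\mathbb E[\omega x_i(s_i,s_{-i})\mid s_i]\ge\mathbb E[\omega x_i(\hat s_i,s_{-i})\mid s_i]$, for all $s_i,\hat s_i$ in the support. *)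

theory Defs
  imports "HOL-Probability.Probability"
begin

definition sig_dist :: "(real \<Rightarrow> real) \<Rightarrow> real \<Rightarrow> real \<Rightarrow> real measure" where
  "sig_dist g a b = density lborel (\<lambda>t. ennreal (indicator {a..b} t * g t))"

text \<open>E[x_i(t, s_{-i}) | omega], where s_{-i} are i.i.d. with density g (the conditional
  density of a signal given omega).\<close>
definition cond_alloc ::
  "nat \<Rightarrow> (real \<Rightarrow> real) \<Rightarrow> real \<Rightarrow> real \<Rightarrow> ((nat \<Rightarrow> real) \<Rightarrow> real) \<Rightarrow> nat \<Rightarrow> real \<Rightarrow> real" where
  "cond_alloc n g a b x i t = (\<integral>s. x (s(i := t)) \<partial>(PiM ({..<n} - {i}) (\<lambda>_. sig_dist g a b)))"

text \<open>E[omega x_i(r, s_{-i}) | s_i = t]: the true type is t (so P[omega=+1|s_i=t] = t),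
  the report is r.  fm, fp are the densities of F_{-1}, F_{+1}.\<close>
definition report_util ::
  "nat \<Rightarrow> (real \<Rightarrow> real) \<Rightarrow> (real \<Rightarrow> real) \<Rightarrow> real \<Rightarrow> real \<Rightarrow> ((nat \<Rightarrow> real) \<Rightarrow> real)
   \<Rightarrow> nat \<Rightarrow> real \<Rightarrow> real \<Rightarrow> real" where
  "report_util n fm fp a b x i t r =
     t * cond_alloc n fp a b x i r - (1 - t) * cond_alloc n fm a b x i r"

definition indirect_util ::
  "nat \<Rightarrow> (real \<Rightarrow> real) \<Rightarrow> (real \<Rightarrow> real) \<Rightarrow> real \<Rightarrow> real \<Rightarrow> ((nat \<Rightarrow> real) \<Rightarrow> real)
   \<Rightarrow> nat \<Rightarrow> real \<Rightarrow> real" where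
  "indirect_util n fm fp a b x i t = report_util n fm fp a b x i t t"

text \<open>Objective E[x_i(s)] (state is +1 or -1 with probability 1/2 each).\<close>
definition objective ::
  "nat \<Rightarrow> (real \<Rightarrow> real) \<Rightarrow> (real \<Rightarrow> real) \<Rightarrow> real \<Rightarrow> real \<Rightarrow> ((nat \<Rightarrow> real) \<Rightarrow> real) \<Rightarrow> real" where
  "objective n fm fp a b x =
     (1/2) * (\<integral>s. x s \<partial>(PiM {..<n} (\<lambda>_. sig_dist fp a b)))
   + (1/2) * (\<integral>s. x s \<partial>(PiM {..<n} (\<lambda>_. sig_dist fm a b)))"

definition mechanism :: "nat \<Rightarrow> ((nat \<Rightarrow> real) \<Rightarrow> real) \<Rightarrow> bool" where
  "mechanism n x \<longleftrightarrow> x \<in> borel_measurable (PiM {..<n} (\<lambda>_. lborel)) \<and> (\<forall>s. 0 \<le> x s \<and> x s \<le> 1)"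

definition feasible ::
  "nat \<Rightarrow> (real \<Rightarrow> real) \<Rightarrow> (real \<Rightarrow> real) \<Rightarrow> real \<Rightarrow> real \<Rightarrow> ((nat \<Rightarrow> real) \<Rightarrow> real) \<Rightarrow> nat \<Rightarrow> bool" where
  "feasible n fm fp a b x i \<longleftrightarrow>
     (\<forall>t\<in>{a..b}. indirect_util n fm fp a b x i t \<ge> 0) \<and>
     (\<forall>t\<in>{a..b}. \<forall>r\<in>{a..b}. indirect_util n fm fp a b x i t \<ge> report_util n fm fp a b x i t r)"

definition optimal ::
  "nat \<Rightarrow> (real \<Rightarrow> real) \<Rightarrow> (real \<Rightarrow> real) \<Rightarrow> real \<Rightarrow> real \<Rightarrow> ((nat \<Rightarrow> real) \<Rightarrow> real) \<Rightarrow> nat \<Rightarrow> bool" where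
  "optimal n fm fp a b x i \<longleftrightarrow>
     mechanism n x \<and> feasible n fm fp a b x i \<and>
     (\<forall>y. mechanism n y \<and> feasible n fm fp a b y i \<longrightarrow> objective n fm fp a b y \<le> objective n fm fp a b x)"

end

theory Submission
  imports Defs
begin

text \<open>
  Write \<open>p(r)\<close>, \<open>q(r)\<close> for the probabilities that agent \<open>i\<close> gets the good after reporting \<open>r\<close>,
  conditional on \<open>\<omega> = +1\<close> and \<open>\<omega> = -1\<close>, so that type \<open>t\<close> reporting \<open>r\<close> earns
  \<open>t p(r) - (1 - t) q(r)\<close>. Suppose \<open>U(t\<^sub>0) < 2t\<^sub>0 - 1\<close> and let \<open>S\<close> be the set of types with
  \<open>U(t) < 2t - 1\<close>. Giving agent \<open>i\<close> the good outright whenever \<open>s\<^sub>i \<in> S\<close> keeps (P) and (IC):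
  reporting a type in \<open>S\<close> now earns \<open>2t - 1\<close>, which for types in \<open>S\<close> beats \<open>U(t)\<close> and hence,
  by (IC), every report outside \<open>S\<close>, while types outside \<open>S\<close> already had \<open>U(t) \<ge> 2t - 1\<close>.
  By (IC), \<open>U\<close> is the upper envelope of the affine maps \<open>t \<mapsto> t p(r) - (1 - t) q(r)\<close>, so it is
  convex (making \<open>S\<close> an interval, hence measurable) and grows with slope at most 2 (so \<open>S\<close>
  contains an open interval around \<open>t\<^sub>0\<close> on which \<open>p\<close> stays away from 1). Since \<open>F\<^sub>+\<^sub>1\<close> has
  positive density there, the modification strictly raises \<open>E[x\<^sub>i]\<close>, contradicting optimality.
\<close>

definition interim_util :: "(real \<Rightarrow> real) \<Rightarrow> (real \<Rightarrow> real) \<Rightarrow> real \<Rightarrow> real \<Rightarrow> real" where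
  "interim_util p q t r = t * p r - (1 - t) * q r"

definition interim_feasible :: "real set \<Rightarrow> (real \<Rightarrow> real) \<Rightarrow> (real \<Rightarrow> real) \<Rightarrow> bool" where
  "interim_feasible A p q \<longleftrightarrow>
     (\<forall>t\<in>A. 0 \<le> interim_util p q t t) \<and>
     (\<forall>t\<in>A. \<forall>r\<in>A. interim_util p q t r \<le> interim_util p q t t)"

lemma convex_on_interim_util:
  assumes "interim_feasible A p q" and "convex A"
  shows "convex_on A (\<lambda>t. interim_util p q t t)"
proof
  fix s x y :: real
  assume "0 < s" "s < 1" "x \<in> A" "y \<in> A"
  define z where "z = (1 - s) *\<^sub>R x + s *\<^sub>R y"
  have "z \<in> A"
    using \<open>convex A\<close> \<open>x \<in> A\<close> \<open>y \<in> A\<close> \<open>0 < s\<close> \<open>s < 1\<close> unfolding z_def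
    by (simp add: convex_alt)
  have "interim_util p q z z = (1 - s) * interim_util p q x z + s * interim_util p q y z"
    by (simp add: z_def interim_util_def algebra_simps)
  also have "\<dots> \<le> (1 - s) * interim_util p q x x + s * interim_util p q y y"
    using assms(1) \<open>x \<in> A\<close> \<open>y \<in> A\<close> \<open>z \<in> A\<close> \<open>0 < s\<close> \<open>s < 1\<close>
    unfolding interim_feasible_def by (intro add_mono mult_left_mono) auto
  finally show "interim_util p q z z \<le> (1 - s) * interim_util p q x x + s * interim_util p q y y" .
qed (rule assms)

lemma convex_interim_deficit_set:
  assumes "interim_feasible A p q" and "convex A"
  shows "convex {t\<in>A. interim_util p q t t < 2 * t - 1}"
  unfolding convex_alt
proof (intro ballI allI impI)
  let ?U = "\<lambda>t. interim_util p q t t"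
  fix x y s :: real
  assume x: "x \<in> {t\<in>A. ?U t < 2 * t - 1}" and y: "y \<in> {t\<in>A. ?U t < 2 * t - 1}"
    and s: "0 \<le> s \<and> s \<le> 1"
  have "(1 - s) *\<^sub>R x + s *\<^sub>R y \<in> A"
    using \<open>convex A\<close> x y s by (simp add: convex_alt)
  moreover have "?U ((1 - s) *\<^sub>R x + s *\<^sub>R y) \<le> (1 - s) * ?U x + s * ?U y"
    using convex_onD[OF convex_on_interim_util[OF assms]] x y s by simp
  moreover have "(1 - s) * ?U x + s * ?U y < 2 * ((1 - s) * x + s * y) - 1"
  proof (cases "s = 1")
    case True then show ?thesis using y by simp
  next
    case False
    then have "(1 - s) * ?U x < (1 - s) * (2 * x - 1)" using x s by (intro mult_strict_left_mono) auto
    moreover have "s * ?U y \<le> s * (2 * y - 1)" using y s by (intro mult_left_mono) auto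
    ultimately show ?thesis by (simp add: algebra_simps)
  qed
  ultimately show "(1 - s) *\<^sub>R x + s *\<^sub>R y \<in> {t\<in>A. ?U t < 2 * t - 1}" by simp
qed

lemma interim_feasible_pool_deficit_set:
  assumes feas: "interim_feasible A p q"
    and S: "S = {t\<in>A. interim_util p q t t < 2 * t - 1}"
  shows "interim_feasible A (\<lambda>r. if r \<in> S then 1 else p r) (\<lambda>r. if r \<in> S then 1 else q r)"
proof -
  have pooled: "interim_util (\<lambda>r. if r \<in> S then 1 else p r) (\<lambda>r. if r \<in> S then 1 else q r) t r =
      (if r \<in> S then 2 * t - 1 else interim_util p q t r)" for t r
    by (simp add: interim_util_def)
  show ?thesis
    using feas unfolding interim_feasible_def pooled by (auto simp: S) (meson less_eq_real_def order.trans)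
qed

lemma interim_util_le_add_dist:
  assumes ic: "interim_util p q t0 t \<le> interim_util p q t0 t0"
    and "0 \<le> p t" "p t \<le> 1" "0 \<le> q t" "q t \<le> 1"
  shows "interim_util p q t t \<le> interim_util p q t0 t0 + 2 * \<bar>t - t0\<bar>"
proof -
  have "interim_util p q t t = interim_util p q t0 t + (t - t0) * (p t + q t)"
    by (simp add: interim_util_def algebra_simps)
  also have "\<dots> \<le> interim_util p q t0 t0 + \<bar>t - t0\<bar> * (p t + q t)"
    using ic assms(2-5) by (intro add_mono mult_right_mono) auto
  also have "\<dots> \<le> interim_util p q t0 t0 + \<bar>t - t0\<bar> * 2"
    using assms(2-5) by (intro add_left_mono mult_left_mono) auto
  finally show ?thesis by simp
qed

lemma interim_deficit_le:
  assumes "t \<le> 1" "p t \<le> 1" "q t \<le> 1"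
  shows "2 * t - 1 - interim_util p q t t \<le> 1 - p t"
proof -
  have "2 * t - 1 - interim_util p q t t = (1 - p t) - (1 - t) * (1 - p t) - (1 - t) * (1 - q t)"
    by (simp add: interim_util_def algebra_simps)
  also have "\<dots> \<le> 1 - p t"
    using assms mult_nonneg_nonneg[of "1 - t" "1 - p t"] mult_nonneg_nonneg[of "1 - t" "1 - q t"]
    by linarith
  finally show ?thesis .
qed

lemma interim_deficit_neighbourhood:
  assumes feas: "interim_feasible {a..b} p q"
    and p: "\<And>r. p r \<in> {0..1}" and q: "\<And>r. q r \<in> {0..1}"
    and ab: "a < b" "b \<le> 1" and t0: "t0 \<in> {a..b}"
    and deficit: "interim_util p q t0 t0 < 2 * t0 - 1"
  obtains l u c where "l < u" "{l<..<u} \<subseteq> {a<..<b}" "0 < c"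
    "\<And>t. t \<in> {l<..<u} \<Longrightarrow> interim_util p q t t < 2 * t - 1 \<and> c \<le> 1 - p t"
proof
  let ?U = "\<lambda>t. interim_util p q t t"
  define d where "d = 2 * t0 - 1 - ?U t0"
  have "0 < d" using deficit by (simp add: d_def)
  show "max a (t0 - d/8) < min b (t0 + d/8)" "0 < d/2"
    using \<open>0 < d\<close> ab t0 by auto
  show "{max a (t0 - d/8)<..<min b (t0 + d/8)} \<subseteq> {a<..<b}" by auto
  fix t assume t: "t \<in> {max a (t0 - d/8)<..<min b (t0 + d/8)}"
  then have "t \<in> {a..b}" by auto
  define e where "e = \<bar>t - t0\<bar>"
  have "e < d/8" "t0 - t \<le> e" using t unfolding e_def abs_less_iff by auto
  moreover have "?U t \<le> ?U t0 + 2 * e"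
    using feas \<open>t \<in> {a..b}\<close> t0 p[of t] q[of t] unfolding e_def
    by (intro interim_util_le_add_dist) (auto simp: interim_feasible_def)
  ultimately have "d/2 < 2 * t - 1 - ?U t"
    using d_def by linarith
  moreover have "2 * t - 1 - ?U t \<le> 1 - p t"
    using \<open>t \<in> {a..b}\<close> ab p[of t] q[of t] by (intro interim_deficit_le) auto
  ultimately show "?U t < 2 * t - 1 \<and> d/2 \<le> 1 - p t"
    using \<open>0 < d\<close> by linarith
qed

lemma prob_space_sig_dist:
  assumes nn: "\<forall>t\<in>{a..b}. 0 \<le> g t" and int: "set_integrable lborel {a..b} g"
    and one: "(LINT t:{a..b}|lborel. g t) = 1"
  shows "prob_space (sig_dist g a b)"
proof
  have "emeasure (sig_dist g a b) (space (sig_dist g a b)) =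
      (\<integral>\<^sup>+t. ennreal (indicator {a..b} t * g t) \<partial>lborel)"
    using int unfolding sig_dist_def set_integrable_def
    by (simp add: emeasure_density borel_measurable_integrable)
  also have "\<dots> = ennreal (\<integral>t. indicator {a..b} t * g t \<partial>lborel)"
    using int nn unfolding set_integrable_def
    by (intro nn_integral_eq_integral) (auto simp: indicator_def)
  finally show "emeasure (sig_dist g a b) (space (sig_dist g a b)) = 1"
    using one by (simp add: set_lebesgue_integral_def)
qed

lemma sets_PiM_sig_dist: "sets (PiM K (\<lambda>_. sig_dist g a b)) = sets (PiM K (\<lambda>_. lborel))"
  by (intro sets_PiM_cong) (auto simp: sig_dist_def)

lemma integrable_mechanism:
  assumes "prob_space (sig_dist g a b)" and "mechanism n x"
  shows "integrable (PiM {..<n} (\<lambda>_. sig_dist g a b)) x"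
proof -
  interpret prob_space "PiM {..<n} (\<lambda>_. sig_dist g a b)"
    using assms(1) by (rule prob_space_PiM)
  show ?thesis
    using assms(2) unfolding mechanism_def
    by (intro integrable_const_bound[where B=1])
       (auto simp: measurable_cong_sets[OF sets_PiM_sig_dist refl])
qed

lemma integrable_mechanism_section:
  assumes "prob_space (sig_dist g a b)" and "mechanism n x" and "i < n"
  shows "integrable (PiM ({..<n} - {i}) (\<lambda>_. sig_dist g a b)) (\<lambda>s. x (s(i := t)))"
proof -
  interpret prob_space "PiM ({..<n} - {i}) (\<lambda>_. sig_dist g a b)"
    using assms(1) by (rule prob_space_PiM)
  have "x \<in> borel_measurable (PiM (insert i ({..<n} - {i})) (\<lambda>_. sig_dist g a b))"
    using assms(2,3) unfolding mechanism_def
    by (simp add: insert_absorb measurable_cong_sets[OF sets_PiM_sig_dist refl])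
  moreover have "(\<lambda>s. s(i := t)) \<in> measurable (PiM ({..<n} - {i}) (\<lambda>_. sig_dist g a b))
      (PiM (insert i ({..<n} - {i})) (\<lambda>_. sig_dist g a b))"
    by (rule measurable_fun_upd[where J="{..<n} - {i}"]) (auto simp: sig_dist_def)
  ultimately show ?thesis
    using assms(2) unfolding mechanism_def
    by (intro integrable_const_bound[where B=1]) (auto intro: measurable_compose)
qed

lemma cond_alloc_bounds:
  assumes "prob_space (sig_dist g a b)" and "mechanism n x" and "i < n"
  shows "cond_alloc n g a b x i r \<in> {0..1}"
proof -
  interpret prob_space "PiM ({..<n} - {i}) (\<lambda>_. sig_dist g a b)"
    using assms(1) by (rule prob_space_PiM)
  have "cond_alloc n g a b x i r \<le> (\<integral>s. 1 \<partial>PiM ({..<n} - {i}) (\<lambda>_. sig_dist g a b))"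
    unfolding cond_alloc_def using assms(2) integrable_mechanism_section[OF assms]
    by (intro integral_mono) (auto simp: mechanism_def)
  then show ?thesis
    using assms(2) by (simp add: cond_alloc_def mechanism_def integral_nonneg prob_space)
qed

lemma emeasure_sig_dist_Ioo_pos:
  assumes g: "set_integrable lborel {a..b} g"
    and "l < u" and "{l<..<u} \<subseteq> {a..b}" and pos: "\<And>t. t \<in> {l<..<u} \<Longrightarrow> 0 < g t"
  shows "0 < emeasure (sig_dist g a b) {l<..<u}"
proof -
  have [measurable]: "(\<lambda>t. indicator {a..b} t * g t) \<in> borel_measurable lborel"
    using g unfolding set_integrable_def by (simp add: borel_measurable_integrable)
  have "emeasure (sig_dist g a b) {l<..<u} =
      (\<integral>\<^sup>+t. ennreal (indicator {a..b} t * g t) * indicator {l<..<u} t \<partial>lborel)"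
    unfolding sig_dist_def by (simp add: emeasure_density)
  moreover have "\<dots> \<noteq> 0"
  proof
    assume "(\<integral>\<^sup>+t. ennreal (indicator {a..b} t * g t) * indicator {l<..<u} t \<partial>lborel) = 0"
    then have "AE t in lborel. ennreal (indicator {a..b} t * g t) * indicator {l<..<u} t = 0"
      by (simp add: nn_integral_0_iff_AE)
    then have "AE t in lborel. t \<notin> {l<..<u}"
      by (rule eventually_mono) (use pos \<open>{l<..<u} \<subseteq> {a..b}\<close> in \<open>force simp: indicator_def ennreal_eq_0_iff\<close>)
    then have "emeasure lborel {l<..<u} = 0"
      by (subst (asm) AE_iff_measurable[of "{l<..<u}"]) auto
    with \<open>l < u\<close> show False by simp
  qed
  ultimately show ?thesis by (simp add: zero_less_iff_neq_zero)
qed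

lemma feasible_iff_interim_feasible:
  "feasible n fm fp a b x i \<longleftrightarrow>
     interim_feasible {a..b} (cond_alloc n fp a b x i) (cond_alloc n fm a b x i)"
  by (simp add: feasible_def interim_feasible_def indirect_util_def report_util_def interim_util_def)

lemma indirect_util_eq_interim_util:
  "indirect_util n fm fp a b x i t = interim_util (cond_alloc n fp a b x i) (cond_alloc n fm a b x i) t t"
  by (simp add: indirect_util_def report_util_def interim_util_def)

definition allocate_on :: "nat \<Rightarrow> real set \<Rightarrow> ((nat \<Rightarrow> real) \<Rightarrow> real) \<Rightarrow> (nat \<Rightarrow> real) \<Rightarrow> real" where
  "allocate_on i S x = (\<lambda>s. if s i \<in> S then 1 else x s)"

lemma mechanism_allocate_on:
  assumes "mechanism n x" and "i < n" and [measurable]: "S \<in> sets borel"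
  shows "mechanism n (allocate_on i S x)"
  using assms(1,2) unfolding mechanism_def allocate_on_def by (auto intro!: measurable_If_set)

lemma cond_alloc_allocate_on:
  assumes "prob_space (sig_dist g a b)"
  shows "cond_alloc n g a b (allocate_on i S x) i = (\<lambda>r. if r \<in> S then 1 else cond_alloc n g a b x i r)"
proof -
  interpret prob_space "PiM ({..<n} - {i}) (\<lambda>_. sig_dist g a b)"
    using assms by (rule prob_space_PiM)
  show ?thesis by (simp add: cond_alloc_def allocate_on_def prob_space fun_eq_iff)
qed

lemma feasible_allocate_on_deficit_set:
  assumes "prob_space (sig_dist fm a b)" and "prob_space (sig_dist fp a b)"
    and feas: "feasible n fm fp a b x i"
    and S: "S = {t\<in>{a..b}. indirect_util n fm fp a b x i t < 2 * t - 1}"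
  shows "S \<in> sets borel" and "feasible n fm fp a b (allocate_on i S x) i"
proof -
  let ?p = "cond_alloc n fp a b x i" and ?q = "cond_alloc n fm a b x i"
  have ifeas: "interim_feasible {a..b} ?p ?q"
    using feas by (simp add: feasible_iff_interim_feasible)
  have S': "S = {t\<in>{a..b}. interim_util ?p ?q t t < 2 * t - 1}"
    using S by (simp add: indirect_util_eq_interim_util)
  show "S \<in> sets borel"
    using convex_interim_deficit_set[OF ifeas] unfolding S'
    by (intro real_interval_borel_measurable) (simp add: is_interval_convex_1)
  show "feasible n fm fp a b (allocate_on i S x) i"
    using interim_feasible_pool_deficit_set[OF ifeas S'] assms(1,2)
    by (simp add: feasible_iff_interim_feasible cond_alloc_allocate_on)
qed

lemma nn_integral_section_allocate_on_gain:
  assumes "prob_space (sig_dist g a b)" and "mechanism n x" and "i < n" and "t \<in> S"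
  shows "(\<integral>\<^sup>+s. ennreal (allocate_on i S x (s(i := t)) - x (s(i := t))) \<partial>PiM ({..<n} - {i}) (\<lambda>_. sig_dist g a b))
      = ennreal (1 - cond_alloc n g a b x i t)"
proof -
  interpret prob_space "PiM ({..<n} - {i}) (\<lambda>_. sig_dist g a b)"
    using assms(1) by (rule prob_space_PiM)
  have int: "integrable (PiM ({..<n} - {i}) (\<lambda>_. sig_dist g a b)) (\<lambda>s. x (s(i := t)))"
    using integrable_mechanism_section[OF assms(1-3)] .
  have "(\<integral>\<^sup>+s. ennreal (allocate_on i S x (s(i := t)) - x (s(i := t))) \<partial>PiM ({..<n} - {i}) (\<lambda>_. sig_dist g a b))
      = ennreal (\<integral>s. 1 - x (s(i := t)) \<partial>PiM ({..<n} - {i}) (\<lambda>_. sig_dist g a b))"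
    using \<open>t \<in> S\<close> int assms(2)
    by (simp add: allocate_on_def mechanism_def nn_integral_eq_integral)
  also have "\<dots> = ennreal (1 - cond_alloc n g a b x i t)"
    using int by (simp add: cond_alloc_def prob_space)
  finally show ?thesis .
qed

text \<open>The gain is estimated with nonnegative integrals, which avoids proving that
  \<open>cond_alloc\<close> is measurable in the report.\<close>

lemma integral_less_integral_allocate_on:
  assumes prob: "prob_space (sig_dist g a b)" and mech: "mechanism n x" and "i < n"
    and S: "S \<in> sets borel" and J: "J \<in> sets borel" "J \<subseteq> S" "0 < emeasure (sig_dist g a b) J"
    and gain: "0 < c" "\<And>t. t \<in> J \<Longrightarrow> c \<le> 1 - cond_alloc n g a b x i t"
  shows "(\<integral>s. x s \<partial>PiM {..<n} (\<lambda>_. sig_dist g a b)) < (\<integral>s. allocate_on i S x s \<partial>PiM {..<n} (\<lambda>_. sig_dist g a b))"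
proof -
  let ?M = "sig_dist g a b"
  let ?y = "allocate_on i S x"
  interpret product_sigma_finite "\<lambda>_::nat. ?M"
    using prob unfolding product_sigma_finite_def by (simp add: prob_space_imp_sigma_finite)
  have ins: "insert i ({..<n} - {i}) = {..<n}" using \<open>i < n\<close> by auto
  have y: "mechanism n ?y" using mechanism_allocate_on[OF mech \<open>i < n\<close> S] .
  have int: "integrable (PiM {..<n} (\<lambda>_. ?M)) (\<lambda>s. ?y s - x s)"
    using integrable_mechanism[OF prob y] integrable_mechanism[OF prob mech] by simp
  have xy: "x s \<le> ?y s" for s using mech by (simp add: allocate_on_def mechanism_def)
  have "0 < ennreal c * emeasure ?M J"
    using gain J by (simp add: ennreal_zero_less_mult_iff)
  also have "\<dots> = (\<integral>\<^sup>+t. ennreal c * indicator J t \<partial>?M)"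
    using J by (simp add: nn_integral_cmult_indicator sig_dist_def)
  also have "\<dots> \<le> (\<integral>\<^sup>+t. (\<integral>\<^sup>+s. ennreal (?y (s(i := t)) - x (s(i := t))) \<partial>PiM ({..<n} - {i}) (\<lambda>_. ?M)) \<partial>?M)"
  proof (intro nn_integral_mono)
    fix t
    show "ennreal c * indicator J t \<le> (\<integral>\<^sup>+s. ennreal (?y (s(i := t)) - x (s(i := t))) \<partial>PiM ({..<n} - {i}) (\<lambda>_. ?M))"
    proof (cases "t \<in> J")
      case True
      then have "t \<in> S" using \<open>J \<subseteq> S\<close> by blast
      with True show ?thesis
        using gain by (simp add: nn_integral_section_allocate_on_gain[OF prob mech \<open>i < n\<close>] ennreal_leI)
    qed simp
  qed
  also have "\<dots> = (\<integral>\<^sup>+s. ennreal (?y s - x s) \<partial>PiM {..<n} (\<lambda>_. ?M))"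
  proof -
    have "(\<lambda>s. ennreal (?y s - x s)) \<in> borel_measurable (PiM (insert i ({..<n} - {i})) (\<lambda>_. ?M))"
      using y mech unfolding ins mechanism_def measurable_cong_sets[OF sets_PiM_sig_dist refl]
      by (intro measurable_compose[OF _ measurable_ennreal] borel_measurable_diff) auto
    from product_nn_integral_insert_rev[OF _ _ this] show ?thesis
      unfolding ins by simp
  qed
  also have "\<dots> = ennreal (\<integral>s. ?y s - x s \<partial>PiM {..<n} (\<lambda>_. ?M))"
    using int xy by (intro nn_integral_eq_integral) auto
  finally show ?thesis
    using integrable_mechanism[OF prob y] integrable_mechanism[OF prob mech] by simp
qed

lemma objective_less_objective_allocate_on:
  assumes "prob_space (sig_dist fm a b)" and "prob_space (sig_dist fp a b)"
    and "mechanism n x" and "i < n" and "S \<in> sets borel"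
    and "J \<in> sets borel" "J \<subseteq> S" "0 < emeasure (sig_dist fp a b) J"
    and "0 < c" "\<And>t. t \<in> J \<Longrightarrow> c \<le> 1 - cond_alloc n fp a b x i t"
  shows "objective n fm fp a b x < objective n fm fp a b (allocate_on i S x)"
proof -
  have y: "mechanism n (allocate_on i S x)"
    using assms(3-5) by (rule mechanism_allocate_on)
  have "(\<integral>s. x s \<partial>PiM {..<n} (\<lambda>_. sig_dist fm a b)) \<le> (\<integral>s. allocate_on i S x s \<partial>PiM {..<n} (\<lambda>_. sig_dist fm a b))"
    using integrable_mechanism[OF assms(1) assms(3)] integrable_mechanism[OF assms(1) y]
  proof (rule integral_mono)
    show "x s \<le> allocate_on i S x s" for s
      using assms(3) by (simp add: allocate_on_def mechanism_def)
  qed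
  moreover have "(\<integral>s. x s \<partial>PiM {..<n} (\<lambda>_. sig_dist fp a b)) < (\<integral>s. allocate_on i S x s \<partial>PiM {..<n} (\<lambda>_. sig_dist fp a b))"
    using assms(2-4) assms(5-10) by (rule integral_less_integral_allocate_on)
  ultimately show ?thesis
    unfolding objective_def by linarith
qed

lemma objective_less_objective_allocate_on_deficit_set:
  assumes probm: "prob_space (sig_dist fm a b)" and probp: "prob_space (sig_dist fp a b)"
    and mech: "mechanism n x" and i: "i < n" and feas: "feasible n fm fp a b x i"
    and fp_int: "set_integrable lborel {a..b} fp" and fp_pos: "\<And>t. t \<in> {a<..<b} \<Longrightarrow> 0 < fp t"
    and ab: "a < b" "b \<le> 1" and t0: "t0 \<in> {a..b}"
    and deficit: "indirect_util n fm fp a b x i t0 < 2 * t0 - 1"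
    and S: "S = {t\<in>{a..b}. indirect_util n fm fp a b x i t < 2 * t - 1}"
  shows "objective n fm fp a b x < objective n fm fp a b (allocate_on i S x)"
proof -
  define p where "p = cond_alloc n fp a b x i"
  define q where "q = cond_alloc n fm a b x i"
  obtain l u c where lu: "l < u" "{l<..<u} \<subseteq> {a<..<b}" and "0 < c"
    and gain: "\<And>t. t \<in> {l<..<u} \<Longrightarrow> interim_util p q t t < 2 * t - 1 \<and> c \<le> 1 - p t"
  proof (rule interim_deficit_neighbourhood[OF _ _ _ ab t0])
    show "interim_feasible {a..b} p q"
      using feas by (simp add: feasible_iff_interim_feasible p_def q_def)
    show "p r \<in> {0..1}" "q r \<in> {0..1}" for r
      unfolding p_def q_def using cond_alloc_bounds[OF probp mech i] cond_alloc_bounds[OF probm mech i] .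
    show "interim_util p q t0 t0 < 2 * t0 - 1"
      using deficit by (simp add: indirect_util_eq_interim_util p_def q_def)
  qed blast
  have "0 < emeasure (sig_dist fp a b) {l<..<u}"
    using lu fp_pos by (intro emeasure_sig_dist_Ioo_pos[OF fp_int]) auto
  moreover have "{l<..<u} \<subseteq> S"
    using lu gain by (auto simp: S indirect_util_eq_interim_util p_def q_def)
  moreover note S_borel = feasible_allocate_on_deficit_set(1)[OF probm probp feas S]
  ultimately show ?thesis
    using gain unfolding p_def
    by (intro objective_less_objective_allocate_on[OF probm probp mech i S_borel _ _ _ \<open>0 < c\<close>]) auto
qed

theorem lemmaA3:
  fixes n i :: nat and a b :: real and fm fp f f' :: "real \<Rightarrow> real" and x :: "(nat \<Rightarrow> real) \<Rightarrow> real"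
  assumes n: "n \<ge> 2" and i: "i < n"
    and ab: "0 \<le> a" "a < b" "b \<le> 1"
    and fm_nn: "\<forall>t\<in>{a..b}. 0 \<le> fm t" and fp_nn: "\<forall>t\<in>{a..b}. 0 \<le> fp t"
    and fm_int: "set_integrable lborel {a..b} fm" and fp_int: "set_integrable lborel {a..b} fp"
    and fm_one: "(LINT t:{a..b}|lborel. fm t) = 1" and fp_one: "(LINT t:{a..b}|lborel. fp t) = 1"
    and normalized: "\<forall>t\<in>{a..b}. fp t = t * (fp t + fm t)"
    and f_def: "\<forall>t. f t = (fm t + fp t) / 2"
    and f_pos: "\<forall>t\<in>{a<..<b}. 0 < f t"
    and f_deriv: "\<forall>t\<in>{a<..<b}. (f has_real_derivative f' t) (at t)"
    and f'_cont: "continuous_on {a<..<b} f'"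
    and f'_bdd: "\<exists>B. \<forall>t\<in>{a<..<b}. \<bar>f' t / f t\<bar> \<le> B"
    and opt: "optimal n fm fp a b x i"
  shows "\<forall>t\<in>{a..b}. indirect_util n fm fp a b x i t \<ge> 2 * t - 1"
proof (rule ballI, rule ccontr)
  fix t0 assume t0: "t0 \<in> {a..b}" and "\<not> 2 * t0 - 1 \<le> indirect_util n fm fp a b x i t0"
  define S where "S = {t\<in>{a..b}. indirect_util n fm fp a b x i t < 2 * t - 1}"
  have probm: "prob_space (sig_dist fm a b)" and probp: "prob_space (sig_dist fp a b)"
    using prob_space_sig_dist fm_nn fm_int fm_one fp_nn fp_int fp_one by auto
  have mech: "mechanism n x" and feas: "feasible n fm fp a b x i"
    and best: "\<And>y. mechanism n y \<Longrightarrow> feasible n fm fp a b y i \<Longrightarrow> objective n fm fp a b y \<le> objective n fm fp a b x"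
    using opt unfolding optimal_def by blast+
  have "objective n fm fp a b (allocate_on i S x) \<le> objective n fm fp a b x"
    using mechanism_allocate_on[OF mech i feasible_allocate_on_deficit_set(1)[OF probm probp feas S_def]]
      feasible_allocate_on_deficit_set(2)[OF probm probp feas S_def]
    by (rule best)
  moreover have fp_pos: "0 < fp t" if "t \<in> {a<..<b}" for t
  proof -
    have "fp t = t * (fp t + fm t)" using normalized that by auto
    also have "\<dots> = t * (2 * f t)" using f_def[rule_format, of t] by simp
    finally show ?thesis using that ab f_pos by simp
  qed
  ultimately show False
    using objective_less_objective_allocate_on_deficit_set[OF probm probp mech i feas fp_int fp_pos ab(2,3) t0 _ S_def]
      \<open>\<not> _\<close> by linarith
qed

end
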